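(* Assume the standing assumptions stated in the context. Let $\mathsf{u}=(\mathsf{u}_1,\mathsf{u}_2)$ be a bounded upper semicontinuous viscosity subsolution of the system $$\rho v_j(x)=H(x,y_j,Dv_j(x))+\lambda_j\big(v_{\bar\jmath}(x)-v_j(x)\big),\qquad j=1,2,\ \bar\jmath=3-j,$$ on $[\underline{x},+\infty)$. Let $\mathsf{v}=(\mathsf{v}_1,\mathsf{v}_2)$ be a bounded lower semicontinuous viscosity supersolution of the same system on $(\underline{x},+\infty)$. Extend $\mathsf{v}_j$ to $\underline{x}$ by $$\mathsf{v}_j(\underline{x})=\liminf_{z\to\underline{x},\,z>\underline{x}}\mathsf{v}_j(z).$$ Then $\mathsf{u}_j\le\mathsf{v}_j$ on $[\underline{x},+\infty)$ for $j=1,2$.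
   Context: Standing assumptions: $\rho>0$; $-\infty<r<\rho$; $0<y_1<y_2$; $\gamma>1$; $\underline{x}\le0$ with $\rho\underline{x}+y_j>0$ for $j=1,2$; $\lambda_1,\lambda_2\ge0$ are constants (Poisson switching intensities). The utility is $u(c)=\frac{c^{1-\gamma}}{1-\gamma}$ for $c>0$. The Hamiltonian is $$H(x,y_j,p)=\sup_{c\ge0}\{u(c)+(rx+y_j-c)p\}=\begin{cases}(rx+y_j)p+\frac{\gamma}{1-\gamma}p^{1-\frac1\gamma}, & p\ge0,\\ +\infty,& p<0.\end{cases}$$ All functions are defined on $[\underline{x},+\infty)$. Viscosity subsolution on a set $S\subseteq[\underline{x},\infty)$: an u.s.c. pair $v=(v_1,v_2)$ such that whenever $\varphi$ is smooth, $j\in\{1,2\}$, and $v_j-\varphi$ has a local maximum (relative to $[\underline{x},\infty)$) at $x_0\in S$, then $\rho v_j(x_0)\le H(x_0,y_j,D\varphi(x_0))+\lambda_j(v_{\bar\jmath}(x_0)-v_j(x_0))$. Viscosity supersolution on $S$: an l.s.c. pair such that whenever $v_j-\varphi$ has a local minimum at $x_0\in S$, then $\rho v_j(x_0)\ge H(x_0,y_j,D\varphi(x_0))+\lambda_j(v_{\bar\jmath}(x_0)-v_j(x_0))$. *)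

theory Defs
  imports "HOL-Analysis.Analysis" "HOL-Library.Extended_Real"
begin

definition Ham :: "real \<Rightarrow> real \<Rightarrow> real \<Rightarrow> real \<Rightarrow> real \<Rightarrow> ereal" where
  "Ham r \<gamma> x y p =
     (if p \<ge> 0 then ereal ((r * x + y) * p + \<gamma> / (1 - \<gamma>) * p powr (1 - 1 / \<gamma>))
      else \<infinity>)"

text \<open>Smooth (here: continuously differentiable on the reals) test functions.\<close>
definition test_fun :: "(real \<Rightarrow> real) \<Rightarrow> (real \<Rightarrow> real) \<Rightarrow> bool" where
  "test_fun \<phi> D\<phi> \<longleftrightarrow> (\<forall>x. (\<phi> has_real_derivative D\<phi> x) (at x)) \<and> continuous_on UNIV D\<phi>"

definition loc_max_rel :: "real \<Rightarrow> (real \<Rightarrow> real) \<Rightarrow> real \<Rightarrow> bool" where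
  "loc_max_rel xl f x0 \<longleftrightarrow> (\<exists>e>0. \<forall>x. xl \<le> x \<and> \<bar>x - x0\<bar> < e \<longrightarrow> f x \<le> f x0)"

definition loc_min_rel :: "real \<Rightarrow> (real \<Rightarrow> real) \<Rightarrow> real \<Rightarrow> bool" where
  "loc_min_rel xl f x0 \<longleftrightarrow> (\<exists>e>0. \<forall>x. xl \<le> x \<and> \<bar>x - x0\<bar> < e \<longrightarrow> f x0 \<le> f x)"

definition usc_on :: "real set \<Rightarrow> (real \<Rightarrow> real) \<Rightarrow> bool" where
  "usc_on S f \<longleftrightarrow> (\<forall>x\<in>S. \<forall>e>0. \<exists>d>0. \<forall>z\<in>S. \<bar>z - x\<bar> < d \<longrightarrow> f z < f x + e)"

definition lsc_on :: "real set \<Rightarrow> (real \<Rightarrow> real) \<Rightarrow> bool" where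
  "lsc_on S f \<longleftrightarrow> (\<forall>x\<in>S. \<forall>e>0. \<exists>d>0. \<forall>z\<in>S. \<bar>z - x\<bar> < d \<longrightarrow> f x - e < f z)"

text \<open>Pairs are indexed by j in {1,2}; the other index is 3 - j.
  Parameters: rho r gamma, incomes y j, intensities lam j, lower bound xl.\<close>
definition visc_sub :: "real \<Rightarrow> real \<Rightarrow> real \<Rightarrow> (nat \<Rightarrow> real) \<Rightarrow> (nat \<Rightarrow> real) \<Rightarrow> real
    \<Rightarrow> real set \<Rightarrow> (nat \<Rightarrow> real \<Rightarrow> real) \<Rightarrow> bool" where
  "visc_sub \<rho> r \<gamma> y lam xl S v \<longleftrightarrow>
     (\<forall>j\<in>{1,2}. usc_on {xl..} (v j)) \<and>
     (\<forall>\<phi> D\<phi> j x0. test_fun \<phi> D\<phi> \<and> j \<in> {1,2} \<and> x0 \<in> S \<and>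
        loc_max_rel xl (\<lambda>x. v j x - \<phi> x) x0 \<longrightarrow>
        ereal (\<rho> * v j x0) \<le> Ham r \<gamma> x0 (y j) (D\<phi> x0) + ereal (lam j * (v (3 - j) x0 - v j x0)))"

definition visc_super :: "real \<Rightarrow> real \<Rightarrow> real \<Rightarrow> (nat \<Rightarrow> real) \<Rightarrow> (nat \<Rightarrow> real) \<Rightarrow> real
    \<Rightarrow> real set \<Rightarrow> (nat \<Rightarrow> real \<Rightarrow> real) \<Rightarrow> bool" where
  "visc_super \<rho> r \<gamma> y lam xl S v \<longleftrightarrow>
     (\<forall>j\<in>{1,2}. lsc_on S (v j)) \<and>
     (\<forall>\<phi> D\<phi> j x0. test_fun \<phi> D\<phi> \<and> j \<in> {1,2} \<and> x0 \<in> S \<and>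
        loc_min_rel xl (\<lambda>x. v j x - \<phi> x) x0 \<longrightarrow>
        ereal (\<rho> * v j x0) \<ge> Ham r \<gamma> x0 (y j) (D\<phi> x0) + ereal (lam j * (v (3 - j) x0 - v j x0)))"

end

theory Submission
  imports Defs
begin

(*
  Doubling of variables with a shift adapted to the state constraint.  If u j - v j were positive
  somewhere, a small penalty L z = beta ln (1 + (z - xl)^2) keeps the supremum S of the penalised
  gap u j - v j - L positive, adds only a drift of order beta to the Hamiltonian, and makes the
  doubled function

      u j x - v j z - ((x + s - z) / eps)^2 - L z

  attain its maximum over j and x, z >= xl.  At a maximiser with z > xl both viscosity inequalities
  apply; the switching terms have the right sign because j is maximal as well, and since the
  consumption term of the Hamiltonian is decreasing in p, the two Hamiltonians differ by at most
  r (x - z) p plus the drift, which is small because |x + s - z| = o(eps).  Hence rho S <= O(beta),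
  a contradiction.  The maximiser stays off the boundary z = xl either because S is not approached
  there (shift s = 0) or, if it is, thanks to the shift s = eps and the fact that v j xl is the
  lower limit of v j from the right.
*)

lemma exists_pos_if_eventually_at_right_0:
  assumes "eventually P (at_right (0::real))"
  shows "\<exists>t>0. P t"
  using eventually_happens'[OF _ eventually_conj[OF eventually_at_right_less assms]] by simp

lemma usc_compact_attains_max:
  fixes F :: "'a::metric_space \<Rightarrow> real"
  assumes "compact K" "K \<noteq> {}"
    and usc: "\<forall>a\<in>K. \<forall>e>0. \<exists>d>0. \<forall>q\<in>K. dist q a < d \<longrightarrow> F q < F a + e"
  shows "\<exists>a\<in>K. \<forall>q\<in>K. F q \<le> F a"
proof (rule ccontr)
  assume "\<not> ?thesis"
  then obtain b where b: "\<And>a. a \<in> K \<Longrightarrow> b a \<in> K \<and> F a < F (b a)"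
    by (metis not_le)
  have "\<exists>d>0. \<forall>q\<in>K. dist q a < d \<longrightarrow> F q < F (b a)" if "a \<in> K" for a
    using usc[rule_format, OF that, of "F (b a) - F a"] b[OF that] by auto
  then obtain d where d: "\<And>a. a \<in> K \<Longrightarrow> d a > 0 \<and> (\<forall>q\<in>K. dist q a < d a \<longrightarrow> F q < F (b a))"
    by metis
  obtain C where C: "C \<subseteq> K" "finite C" "K \<subseteq> (\<Union>a\<in>C. ball a (d a))"
    by (rule compactE_image[OF \<open>compact K\<close>, of K "\<lambda>a. ball a (d a)"]) (use d in force)+
  then have "C \<noteq> {}" using \<open>K \<noteq> {}\<close> by blast
  \<comment> \<open>the best of the finitely many improvements is improved upon once more\<close>
  then obtain c where c: "c \<in> C" "\<And>a. a \<in> C \<Longrightarrow> F (b a) \<le> F (b c)"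
    using Max_in[of "(\<lambda>a. F (b a)) ` C"] Max_ge[of "(\<lambda>a. F (b a)) ` C"] \<open>finite C\<close> by fastforce
  then obtain a where "a \<in> C" "dist (b c) a < d a"
    using C b[of c] by (force simp: dist_commute)
  then have "F (b c) < F (b a)" using d C b[of c] \<open>c \<in> C\<close> by blast
  then show False using c(2)[OF \<open>a \<in> C\<close>] by simp
qed

lemma finite_family_attains_max:
  fixes F :: "'i \<Rightarrow> 'a \<Rightarrow> 'b::linorder"
  assumes "finite J" "J \<noteq> {}" "\<And>j. j \<in> J \<Longrightarrow> \<exists>a\<in>C. \<forall>q\<in>C. F j q \<le> F j a"
  shows "\<exists>j\<in>J. \<exists>a\<in>C. \<forall>j'\<in>J. \<forall>q\<in>C. F j' q \<le> F j a"
proof -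
  obtain a where a: "\<And>j. j \<in> J \<Longrightarrow> a j \<in> C \<and> (\<forall>q\<in>C. F j q \<le> F j (a j))"
    using assms(3) by metis
  obtain j where "j \<in> J" "\<And>j'. j' \<in> J \<Longrightarrow> F j' (a j') \<le> F j (a j)"
    using Max_in[of "(\<lambda>j. F j (a j)) ` J"] Max_ge[of "(\<lambda>j. F j (a j)) ` J"] assms(1,2) by fastforce
  then show ?thesis using a by (meson order_trans)
qed

lemma usc_doubled_function:
  fixes f g :: "real \<Rightarrow> real" and h :: "real \<times> real \<Rightarrow> real"
  assumes f: "usc_on A f" and g: "lsc_on A g" and h: "continuous_on UNIV h" and "K \<subseteq> A \<times> A"
  shows "\<forall>a\<in>K. \<forall>e>0. \<exists>d>0. \<forall>q\<in>K. dist q a < d \<longrightarrow>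
           f (fst q) - g (snd q) - h q < f (fst a) - g (snd a) - h a + e"
proof (intro ballI allI impI)
  fix a e assume "a \<in> K" "0 < (e::real)"
  then have A: "fst a \<in> A" "snd a \<in> A" and "0 < e/3" using \<open>K \<subseteq> A \<times> A\<close> by auto
  obtain d1 where d1: "d1 > 0" "\<forall>z\<in>A. \<bar>z - fst a\<bar> < d1 \<longrightarrow> f z < f (fst a) + e/3"
    using f A \<open>0 < e/3\<close> unfolding usc_on_def by blast
  obtain d2 where d2: "d2 > 0" "\<forall>z\<in>A. \<bar>z - snd a\<bar> < d2 \<longrightarrow> g (snd a) - e/3 < g z"
    using g A \<open>0 < e/3\<close> unfolding lsc_on_def by blast
  obtain d3 where d3: "d3 > 0" "\<forall>q. dist q a < d3 \<longrightarrow> dist (h q) (h a) < e/3"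
    using h \<open>0 < e/3\<close> unfolding continuous_on_iff by blast
  show "\<exists>d>0. \<forall>q\<in>K. dist q a < d \<longrightarrow> f (fst q) - g (snd q) - h q < f (fst a) - g (snd a) - h a + e"
  proof (intro exI[of _ "min d1 (min d2 d3)"] conjI ballI impI)
    fix q assume "q \<in> K" and q: "dist q a < min d1 (min d2 d3)"
    then have "fst q \<in> A" "snd q \<in> A" using \<open>K \<subseteq> A \<times> A\<close> by auto
    moreover have "\<bar>fst q - fst a\<bar> < d1" "\<bar>snd q - snd a\<bar> < d2"
      using q dist_fst_le[of q a] dist_snd_le[of q a] by (auto simp: dist_real_def)
    ultimately have "f (fst q) < f (fst a) + e/3" "g (snd a) - e/3 < g (snd q)"
      using d1 d2 by auto
    moreover have "dist (h q) (h a) < e/3" using d3(2)[rule_format, of q] q by simp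
    then have "\<bar>h q - h a\<bar> < e/3" by (simp add: dist_real_def)
    ultimately show "f (fst q) - g (snd q) - h q < f (fst a) - g (snd a) - h a + e"
      by linarith
  qed (use d1 d2 d3 in simp)
qed

lemma usc_lsc_uniform_bound:
  fixes f g h :: "real \<Rightarrow> real"
  assumes f: "usc_on A f" and g: "lsc_on A g" and h: "continuous_on UNIV h"
    and "compact K" "K \<subseteq> A" and below: "\<forall>z\<in>K. f z - g z - h z < T"
  shows "\<exists>\<delta>>0. \<forall>x\<in>A. \<forall>z\<in>K. \<bar>x - z\<bar> < \<delta> \<longrightarrow> f x - g z - h z < T"
proof -
  define F where "F q = f (fst q) - g (snd q) - h (snd q)" for q :: "real \<times> real"
  have "continuous_on UNIV (\<lambda>q::real \<times> real. h (snd q))"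
    by (intro continuous_on_compose2[OF h] continuous_intros) auto
  then have usc: "\<forall>a\<in>A \<times> A. \<forall>e>0. \<exists>d>0. \<forall>q\<in>A \<times> A. dist q a < d \<longrightarrow> F q < F a + e"
    using usc_doubled_function[OF f g] unfolding F_def by blast
  have "\<exists>d>0. \<forall>q\<in>A \<times> A. dist q (z, z) < d \<longrightarrow> F q < T" if "z \<in> K" for z
    using usc[rule_format, of "(z, z)" "T - F (z, z)"] below that \<open>K \<subseteq> A\<close> by (force simp: F_def)
  then obtain d where d: "\<And>z. z \<in> K \<Longrightarrow> d z > 0 \<and> (\<forall>q\<in>A \<times> A. dist q (z, z) < d z \<longrightarrow> F q < T)"
    by metis
  obtain \<delta> where "0 < \<delta>" and \<delta>: "\<And>p. p \<in> (\<lambda>z. (z, z)) ` K \<Longrightarrow> \<exists>G \<in> (\<lambda>z. ball (z, z) (d z)) ` K. ball p \<delta> \<subseteq> G"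
  proof (rule Heine_Borel_lemma)
    show "compact ((\<lambda>z. (z, z)) ` K)"
      by (intro compact_continuous_image continuous_intros \<open>compact K\<close>)
    show "(\<lambda>z. (z, z)) ` K \<subseteq> \<Union> ((\<lambda>z. ball (z, z) (d z)) ` K)" using d by force
  qed auto
  show ?thesis
  proof (intro exI[of _ \<delta>] conjI ballI impI)
    fix x z assume "x \<in> A" "z \<in> K" "\<bar>x - z\<bar> < \<delta>"
    then obtain w where "w \<in> K" "ball (z, z) \<delta> \<subseteq> ball (w, w) (d w)" using \<delta> by blast
    moreover have "(x, z) \<in> ball (z, z) \<delta>"
      using \<open>\<bar>x - z\<bar> < \<delta>\<close> by (simp add: dist_Pair_Pair dist_real_def)
    ultimately have "dist (x, z) (w, w) < d w" by (auto simp: dist_commute)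
    then show "f x - g z - h z < T"
      using d \<open>w \<in> K\<close> \<open>x \<in> A\<close> \<open>z \<in> K\<close> \<open>K \<subseteq> A\<close> by (force simp: F_def)
  qed fact
qed

lemma lsc_on_atLeast_if_le_Liminf:
  assumes "lsc_on {a<..} g" and "ereal (g a) \<le> Liminf (at_right a) (\<lambda>z. ereal (g z))"
  shows "lsc_on {a..} g"
  unfolding lsc_on_def
proof (intro ballI allI impI)
  fix x e :: real assume "x \<in> {a..}" "0 < e"
  show "\<exists>d>0. \<forall>z\<in>{a..}. \<bar>z - x\<bar> < d \<longrightarrow> g x - e < g z"
  proof (cases "x = a")
    case True
    have "ereal (g a - e) < ereal (g a)" using \<open>0 < e\<close> by simp
    then have "ereal (g a - e) < Liminf (at_right a) (\<lambda>z. ereal (g z))"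
      using assms(2) by (rule less_le_trans)
    then have "eventually (\<lambda>z. g a - e < g z) (at_right a)" by (auto dest: less_LiminfD)
    then obtain b where "b > a" "\<forall>z>a. z < b \<longrightarrow> g a - e < g z"
      unfolding eventually_at_right_field by auto
    then show ?thesis
      using True \<open>0 < e\<close> by (intro exI[of _ "b - a"]) (auto simp: le_less)
  next
    case False
    then have "x > a" using \<open>x \<in> {a..}\<close> by auto
    then obtain d where "d > 0" "\<forall>z\<in>{a<..}. \<bar>z - x\<bar> < d \<longrightarrow> g x - e < g z"
      using assms(1) \<open>0 < e\<close> unfolding lsc_on_def by blast
    then show ?thesis
      using \<open>x > a\<close> by (intro exI[of _ "min d (x - a)"]) auto
  qed
qed

lemma Liminf_at_right_approx:
  fixes a d e :: real
  assumes "Liminf (at_right a) (\<lambda>z. ereal (g z)) \<le> ereal (g a)" "0 < d" "0 < e"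
  shows "\<exists>c. a < c \<and> c < a + d \<and> g c < g a + e"
proof (rule ccontr)
  assume "\<not> ?thesis"
  then have "eventually (\<lambda>z. ereal (g a + e) \<le> ereal (g z)) (at_right a)"
    unfolding eventually_at_right_field using \<open>0 < d\<close> by (auto intro!: exI[of _ "a + d"])
  then have "ereal (g a + e) \<le> Liminf (at_right a) (\<lambda>z. ereal (g z))"
    by (rule Liminf_bounded)
  then have "g a + e \<le> g a" using assms(1) by (metis ereal_less_eq(3) order_trans)
  then show False using \<open>0 < e\<close> by simp
qed

definition ham :: "real \<Rightarrow> real \<Rightarrow> real \<Rightarrow> real \<Rightarrow> real \<Rightarrow> real" where
  "ham r \<gamma> x y p = (r * x + y) * p + \<gamma> / (1 - \<gamma>) * p powr (1 - 1 / \<gamma>)"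

lemma Ham_eq_ham: "0 \<le> p \<Longrightarrow> Ham r \<gamma> x y p = ereal (ham r \<gamma> x y p)"
  by (simp add: Ham_def ham_def)

lemma ham_diff_le:
  assumes "1 < \<gamma>" "0 \<le> q" "q \<le> p"
  shows "ham r \<gamma> x y p - ham r \<gamma> z y q \<le> r * (x - z) * p + (r * z + y) * (p - q)"
proof -
  have "q powr (1 - 1 / \<gamma>) \<le> p powr (1 - 1 / \<gamma>)"
    using assms by (intro powr_mono2) auto
  moreover have "\<gamma> / (1 - \<gamma>) < 0" using assms by (simp add: divide_pos_neg)
  ultimately have "\<gamma> / (1 - \<gamma>) * p powr (1 - 1 / \<gamma>) \<le> \<gamma> / (1 - \<gamma>) * q powr (1 - 1 / \<gamma>)"
    by (intro mult_left_mono_neg) auto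
  then show ?thesis unfolding ham_def by (simp add: algebra_simps)
qed

lemma test_fun_continuous: "test_fun \<phi> D\<phi> \<Longrightarrow> continuous_on UNIV \<phi>"
  unfolding test_fun_def by (auto intro: has_real_derivative_imp_continuous_on)

lemma test_fun_diff: "test_fun f f' \<Longrightarrow> test_fun g g' \<Longrightarrow> test_fun (\<lambda>t. f t - g t) (\<lambda>t. f' t - g' t)"
  unfolding test_fun_def by (auto intro!: DERIV_diff continuous_on_diff)

lemma test_fun_scaled_square: "test_fun (\<lambda>t. c * (t - a)\<^sup>2) (\<lambda>t. 2 * c * (t - a))"
  unfolding test_fun_def by (auto intro!: derivative_eq_intros continuous_intros)

lemma visc_sub_test_ineq:
  assumes "visc_sub \<rho> r \<gamma> y lam xl S u" "test_fun \<phi> D\<phi>" "j \<in> {1,2}" "x0 \<in> S"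
    and "loc_max_rel xl (\<lambda>x. u j x - \<phi> x) x0" "0 \<le> D\<phi> x0"
  shows "\<rho> * u j x0 \<le> ham r \<gamma> x0 (y j) (D\<phi> x0) + lam j * (u (3 - j) x0 - u j x0)"
  using assms unfolding visc_sub_def by (force simp: Ham_eq_ham)

lemma visc_super_test_ineq:
  assumes "visc_super \<rho> r \<gamma> y lam xl S v" "test_fun \<phi> D\<phi>" "j \<in> {1,2}" "x0 \<in> S"
    and "loc_min_rel xl (\<lambda>x. v j x - \<phi> x) x0"
  shows "0 \<le> D\<phi> x0"
    and "ham r \<gamma> x0 (y j) (D\<phi> x0) + lam j * (v (3 - j) x0 - v j x0) \<le> \<rho> * v j x0"
proof -
  have ineq: "Ham r \<gamma> x0 (y j) (D\<phi> x0) + ereal (lam j * (v (3 - j) x0 - v j x0)) \<le> ereal (\<rho> * v j x0)"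
    using assms unfolding visc_super_def by blast
  then show "0 \<le> D\<phi> x0" by (cases "0 \<le> D\<phi> x0") (auto simp: Ham_def)
  with ineq show "ham r \<gamma> x0 (y j) (D\<phi> x0) + lam j * (v (3 - j) x0 - v j x0) \<le> \<rho> * v j x0"
    by (simp add: Ham_eq_ham)
qed

definition log_penalty :: "real \<Rightarrow> real \<Rightarrow> real \<Rightarrow> real" where
  "log_penalty \<beta> a t = \<beta> * ln (1 + (t - a)\<^sup>2)"

definition log_penalty' :: "real \<Rightarrow> real \<Rightarrow> real \<Rightarrow> real" where
  "log_penalty' \<beta> a t = 2 * \<beta> * (t - a) / (1 + (t - a)\<^sup>2)"

lemma test_fun_log_penalty: "test_fun (log_penalty \<beta> a) (log_penalty' \<beta> a)"
proof -
  have pos: "0 < 1 + (t - a)\<^sup>2" for t by (simp add: add_pos_nonneg)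
  show ?thesis
    unfolding test_fun_def log_penalty_def log_penalty'_def
    by (auto intro!: derivative_eq_intros continuous_intros simp: pos pos[THEN less_imp_neq, symmetric])
qed

lemma log_penalty_nonneg: "0 \<le> \<beta> \<Longrightarrow> 0 \<le> log_penalty \<beta> a t"
  by (simp add: log_penalty_def)

lemma log_penalty'_nonneg: "0 \<le> \<beta> \<Longrightarrow> a \<le> t \<Longrightarrow> 0 \<le> log_penalty' \<beta> a t"
  by (simp add: log_penalty'_def add_pos_nonneg)

lemma log_penalty_coercive:
  assumes "0 < \<beta>"
  shows "\<exists>R. \<forall>t\<ge>a. log_penalty \<beta> a t \<le> P \<longrightarrow> t \<le> R"
proof (intro exI[of _ "a + exp (P / \<beta>)"] allI impI)
  fix t assume "a \<le> t" "log_penalty \<beta> a t \<le> P"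
  then have "ln (1 + (t - a)\<^sup>2) \<le> P / \<beta>"
    using assms by (simp add: log_penalty_def le_divide_eq mult.commute)
  then have "1 + (t - a)\<^sup>2 \<le> exp (P / \<beta>)"
    by (metis add_pos_nonneg exp_le_cancel_iff exp_ln zero_le_power2 zero_less_one)
  moreover have "2 * (t - a) \<le> 1 + (t - a)\<^sup>2"
    using zero_le_power2[of "t - a - 1"] by (simp add: power2_diff)
  ultimately show "t \<le> a + exp (P / \<beta>)" using \<open>a \<le> t\<close> by argo
qed

lemma log_penalty_drift_le:
  assumes "0 \<le> \<beta>" "a \<le> t"
  shows "(r * t + y) * log_penalty' \<beta> a t \<le> \<beta> * (2 * \<bar>r\<bar> + \<bar>r * a + y\<bar>)"
proof -
  define q where "q = 2 * (t - a) / (1 + (t - a)\<^sup>2)"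
  have den: "0 < 1 + (t - a)\<^sup>2" by (simp add: add_pos_nonneg)
  have "0 \<le> q" using assms den by (simp add: q_def)
  have "q \<le> 1"
    using zero_le_power2[of "t - a - 1"] den by (simp add: q_def power2_diff)
  have "(t - a) * q \<le> 2"
    using den by (simp add: q_def divide_le_eq power2_eq_square algebra_simps)
  have "(r * t + y) * q = r * ((t - a) * q) + (r * a + y) * q" by (simp add: algebra_simps)
  also have "\<dots> \<le> \<bar>r\<bar> * 2 + \<bar>r * a + y\<bar> * 1"
  proof (rule add_mono)
    have "0 \<le> (t - a) * q" using assms \<open>0 \<le> q\<close> by simp
    then show "r * ((t - a) * q) \<le> \<bar>r\<bar> * 2"
      using \<open>(t - a) * q \<le> 2\<close> by (metis abs_ge_self abs_ge_zero mult_mono mult_right_mono order_trans)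
    show "(r * a + y) * q \<le> \<bar>r * a + y\<bar> * 1"
      using \<open>0 \<le> q\<close> \<open>q \<le> 1\<close> by (metis abs_ge_self abs_ge_zero mult_mono)
  qed
  finally have "(r * t + y) * q \<le> 2 * \<bar>r\<bar> + \<bar>r * a + y\<bar>" by simp
  then have "\<beta> * ((r * t + y) * q) \<le> \<beta> * (2 * \<bar>r\<bar> + \<bar>r * a + y\<bar>)"
    using assms(1) by (rule mult_left_mono)
  then show ?thesis by (simp add: log_penalty'_def q_def algebra_simps)
qed

lemma doubling_gradient_term_le:
  fixes d s \<epsilon> \<theta> :: real
  assumes "\<bar>d + s\<bar> \<le> \<epsilon> * \<theta>" "0 \<le> s" "s \<le> \<epsilon>" "0 < \<epsilon>" "\<theta> \<le> 1"
  shows "\<bar>d * (2 * (d + s) / \<epsilon>\<^sup>2)\<bar> \<le> 4 * \<theta>"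
proof -
  have "\<epsilon> * \<theta> \<le> \<epsilon>" using assms by (simp add: mult_left_le)
  then have "\<bar>d\<bar> \<le> 2 * \<epsilon>" using assms by linarith
  then have "\<bar>d\<bar> * \<bar>d + s\<bar> \<le> (2 * \<epsilon>) * (\<epsilon> * \<theta>)"
    using assms(1) by (intro mult_mono) auto
  then have "2 * (\<bar>d\<bar> * \<bar>d + s\<bar>) / \<epsilon>\<^sup>2 \<le> 2 * ((2 * \<epsilon>) * (\<epsilon> * \<theta>)) / \<epsilon>\<^sup>2"
    by (intro divide_right_mono) auto
  moreover have "\<bar>d * (2 * (d + s) / \<epsilon>\<^sup>2)\<bar> = 2 * (\<bar>d\<bar> * \<bar>d + s\<bar>) / \<epsilon>\<^sup>2"
    unfolding abs_mult abs_divide by simp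
  ultimately show ?thesis
    using assms(4) by (simp add: power2_eq_square)
qed

locale sub_super_pair =
  fixes \<rho> r \<gamma> xl B :: real and y lam :: "nat \<Rightarrow> real" and u v :: "nat \<Rightarrow> real \<Rightarrow> real"
  assumes rho_pos: "0 < \<rho>" and gamma_gt_1: "1 < \<gamma>"
    and lam_nonneg: "\<And>j. j \<in> {1,2} \<Longrightarrow> 0 \<le> lam j"
    and sub: "visc_sub \<rho> r \<gamma> y lam xl {xl..} u"
    and super: "visc_super \<rho> r \<gamma> y lam xl {xl<..} v"
    and v_boundary: "\<And>j. j \<in> {1,2} \<Longrightarrow> ereal (v j xl) = Liminf (at_right xl) (\<lambda>z. ereal (v j z))"
    and gap_le: "\<And>j x z. j \<in> {1,2} \<Longrightarrow> xl \<le> x \<Longrightarrow> xl \<le> z \<Longrightarrow> u j x - v j z \<le> B"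
begin

lemma u_usc: "j \<in> {1,2} \<Longrightarrow> usc_on {xl..} (u j)"
  using sub unfolding visc_sub_def by blast

lemma v_lsc: "j \<in> {1,2} \<Longrightarrow> lsc_on {xl..} (v j)"
  using super v_boundary[of j] unfolding visc_super_def
  by (auto intro!: lsc_on_atLeast_if_le_Liminf)

end

(* L is a penalty making maximisers of the doubled function exist; K bounds the drift
   (r z + y j) L' z that it adds to the Hamiltonian. *)
locale penalized_pair = sub_super_pair +
  fixes L L' :: "real \<Rightarrow> real" and K :: real
  assumes L_test: "test_fun L L'"
    and L_nonneg: "\<And>z. xl \<le> z \<Longrightarrow> 0 \<le> L z"
    and L'_nonneg: "\<And>z. xl \<le> z \<Longrightarrow> 0 \<le> L' z"
    and L_coercive: "\<And>P. \<exists>R. \<forall>z\<ge>xl. L z \<le> P \<longrightarrow> z \<le> R"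
    and drift_le: "\<And>j z. j \<in> {1,2} \<Longrightarrow> xl \<le> z \<Longrightarrow> (r * z + y j) * L' z \<le> K"
begin

definition sup_gap :: real where
  "sup_gap = (SUP (j, x) \<in> {1,2} \<times> {xl..}. u j x - v j x - L x)"

lemma bdd_above_gap: "bdd_above ((\<lambda>(j, x). u j x - v j x - L x) ` ({1,2} \<times> {xl..}))"
proof (rule bdd_aboveI)
  fix g assume "g \<in> (\<lambda>(j, x). u j x - v j x - L x) ` ({1,2} \<times> {xl..})"
  then obtain j x where "g = u j x - v j x - L x" "j \<in> {1,2}" "xl \<le> x" by auto
  then show "g \<le> B" using gap_le[of j x x] L_nonneg[of x] by linarith
qed

lemma gap_le_sup_gap: "j \<in> {1,2} \<Longrightarrow> xl \<le> x \<Longrightarrow> u j x - v j x - L x \<le> sup_gap"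
  unfolding sup_gap_def using bdd_above_gap by (force intro: cSUP_upper2[where x="(j, x)"])

lemma sup_gap_le: "sup_gap \<le> B"
  unfolding sup_gap_def
proof (rule cSUP_least)
  fix q assume "q \<in> {1::nat, 2} \<times> {xl..}"
  then show "(case q of (j, x) \<Rightarrow> u j x - v j x - L x) \<le> B"
    using gap_le[of "fst q" "snd q" "snd q"] L_nonneg[of "snd q"] by (auto split: prod.split)
qed auto

lemma sup_gap_approx: "0 < e \<Longrightarrow> \<exists>j\<in>{1,2}. \<exists>x\<ge>xl. sup_gap - e < u j x - v j x - L x"
  using less_cSUP_iff[OF _ bdd_above_gap, of "sup_gap - e"] unfolding sup_gap_def by auto

definition doubled :: "real \<Rightarrow> real \<Rightarrow> nat \<Rightarrow> real \<Rightarrow> real \<Rightarrow> real" where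
  "doubled \<epsilon> s j x z = u j x - v j z - ((x + s - z) / \<epsilon>)\<^sup>2 - L z"

definition doubled_max :: "real \<Rightarrow> real \<Rightarrow> nat \<Rightarrow> real \<Rightarrow> real \<Rightarrow> bool" where
  "doubled_max \<epsilon> s j x z \<longleftrightarrow> j \<in> {1,2} \<and> xl \<le> x \<and> xl \<le> z \<and>
     (\<forall>j'\<in>{1,2}. \<forall>x'\<ge>xl. \<forall>z'\<ge>xl. doubled \<epsilon> s j' x' z' \<le> doubled \<epsilon> s j x z)"

lemma doubled_le_gap: "doubled \<epsilon> s j x z \<le> u j x - v j z - L z"
  by (simp add: doubled_def)

lemma doubled_max_super_test:
  assumes max: "doubled_max \<epsilon> s j x z" and "xl < z" "0 < \<epsilon>"
  defines "p \<equiv> 2 * (x + s - z) / \<epsilon>\<^sup>2"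
  shows "0 \<le> p - L' z"
    and "ham r \<gamma> z (y j) (p - L' z) + lam j * (v (3 - j) z - v j z) \<le> \<rho> * v j z"
proof -
  have j: "j \<in> {1,2}" "xl \<le> x" using max by (auto simp: doubled_max_def)
  have "loc_min_rel xl (\<lambda>t. v j t - (- (1 / \<epsilon>\<^sup>2) * (t - (x + s))\<^sup>2 - L t)) z"
    unfolding loc_min_rel_def
  proof (intro exI[of _ 1] conjI allI impI)
    fix t assume "xl \<le> t \<and> \<bar>t - z\<bar> < 1"
    then have "doubled \<epsilon> s j x t \<le> doubled \<epsilon> s j x z" using max j by (auto simp: doubled_max_def)
    then show "v j z - (- (1 / \<epsilon>\<^sup>2) * (z - (x + s))\<^sup>2 - L z) \<le> v j t - (- (1 / \<epsilon>\<^sup>2) * (t - (x + s))\<^sup>2 - L t)"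
      by (auto simp: doubled_def power_divide power2_commute)
  qed simp
  from visc_super_test_ineq[OF super test_fun_diff[OF test_fun_scaled_square L_test] j(1) _ this]
  show "0 \<le> p - L' z" and "ham r \<gamma> z (y j) (p - L' z) + lam j * (v (3 - j) z - v j z) \<le> \<rho> * v j z"
    using \<open>xl < z\<close> \<open>0 < \<epsilon>\<close> by (simp_all add: p_def field_simps)
qed

lemma doubled_max_sub_test:
  assumes max: "doubled_max \<epsilon> s j x z" and "0 < \<epsilon>"
  defines "p \<equiv> 2 * (x + s - z) / \<epsilon>\<^sup>2"
  assumes "0 \<le> p"
  shows "\<rho> * u j x \<le> ham r \<gamma> x (y j) p + lam j * (u (3 - j) x - u j x)"
proof -
  have j: "j \<in> {1,2}" "xl \<le> x" "xl \<le> z" using max by (auto simp: doubled_max_def)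
  have "loc_max_rel xl (\<lambda>t. u j t - 1 / \<epsilon>\<^sup>2 * (t - (z - s))\<^sup>2) x"
    unfolding loc_max_rel_def
  proof (intro exI[of _ 1] conjI allI impI)
    fix t assume "xl \<le> t \<and> \<bar>t - x\<bar> < 1"
    then have "doubled \<epsilon> s j t z \<le> doubled \<epsilon> s j x z" using max j by (auto simp: doubled_max_def)
    then show "u j t - 1 / \<epsilon>\<^sup>2 * (t - (z - s))\<^sup>2 \<le> u j x - 1 / \<epsilon>\<^sup>2 * (x - (z - s))\<^sup>2"
      by (auto simp: doubled_def power_divide diff_diff_eq2)
  qed simp
  from visc_sub_test_ineq[OF sub test_fun_scaled_square j(1) _ this]
  show ?thesis using j \<open>0 \<le> p\<close> \<open>0 < \<epsilon>\<close> by (simp add: p_def field_simps)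
qed

lemma doubled_max_viscosity:
  assumes max: "doubled_max \<epsilon> s j x z" and "xl < z" "0 < \<epsilon>"
  shows "\<rho> * (u j x - v j z) \<le> r * (x - z) * (2 * (x + s - z) / \<epsilon>\<^sup>2) + K"
proof -
  define p where "p = 2 * (x + s - z) / \<epsilon>\<^sup>2"
  have j: "j \<in> {1,2}" "3 - j \<in> {1,2}" "xl \<le> x" using max by (auto simp: doubled_max_def)
  note super_ineq = doubled_max_super_test[OF max \<open>xl < z\<close> \<open>0 < \<epsilon>\<close>, folded p_def]
  have "0 \<le> L' z" using L'_nonneg \<open>xl < z\<close> by simp
  then have "0 \<le> p" using super_ineq(1) by simp
  then have sub_ineq: "\<rho> * u j x \<le> ham r \<gamma> x (y j) p + lam j * (u (3 - j) x - u j x)"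
    by (rule doubled_max_sub_test[OF max \<open>0 < \<epsilon>\<close>, folded p_def])
  have "ham r \<gamma> x (y j) p - ham r \<gamma> z (y j) (p - L' z) \<le> r * (x - z) * p + (r * z + y j) * L' z"
    using ham_diff_le[OF gamma_gt_1 super_ineq(1), of p r x "y j" z] \<open>0 \<le> L' z\<close> by simp
  moreover have "(r * z + y j) * L' z \<le> K" using drift_le j \<open>xl < z\<close> by simp
  \<comment> \<open>the switching terms cancel favourably because \<open>(j, x, z)\<close> also beats \<open>(3 - j, x, z)\<close>\<close>
  moreover have "doubled \<epsilon> s (3 - j) x z \<le> doubled \<epsilon> s j x z"
    using max j \<open>xl < z\<close> by (auto simp: doubled_max_def)
  then have "lam j * ((u (3 - j) x - v (3 - j) z) - (u j x - v j z)) \<le> 0"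
    using lam_nonneg[OF j(1)] by (simp add: doubled_def mult_nonneg_nonpos)
  ultimately show ?thesis
    using sub_ineq super_ineq(2) unfolding p_def by (simp add: algebra_simps)
qed

lemma doubled_superlevel:
  assumes "j \<in> {1,2}" "xl \<le> x" "xl \<le> z" "m \<le> doubled \<epsilon> s j x z" "0 < \<epsilon>"
  shows "L z \<le> B - m" and "\<bar>x + s - z\<bar> \<le> (1 + B - m) * \<epsilon>"
proof -
  have pen: "((x + s - z) / \<epsilon>)\<^sup>2 + L z \<le> B - m"
    using gap_le[OF assms(1-3)] assms(4) by (simp add: doubled_def)
  then show "L z \<le> B - m" using zero_le_power2[of "(x + s - z) / \<epsilon>"] by linarith
  define t where "t = (x + s - z) / \<epsilon>"
  have "2 * \<bar>t\<bar> \<le> 1 + t\<^sup>2"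
    using zero_le_power2[of "\<bar>t\<bar> - 1"] by (simp add: power2_diff)
  then have "\<bar>t\<bar> \<le> 1 + B - m"
    using pen L_nonneg[OF assms(3)] unfolding t_def by linarith
  then have "\<bar>x + s - z\<bar> / \<epsilon> \<le> 1 + B - m"
    using \<open>0 < \<epsilon>\<close> by (simp add: t_def)
  then show "\<bar>x + s - z\<bar> \<le> (1 + B - m) * \<epsilon>"
    using \<open>0 < \<epsilon>\<close> by (simp add: divide_le_eq)
qed

lemma doubled_attains_max_on:
  assumes "0 < \<epsilon>" "j \<in> {1,2}" "compact C" "C \<noteq> {}" "C \<subseteq> {xl..} \<times> {xl..}"
  shows "\<exists>a\<in>C. \<forall>q\<in>C. doubled \<epsilon> s j (fst q) (snd q) \<le> doubled \<epsilon> s j (fst a) (snd a)"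
proof -
  define h where "h q = ((fst q + s - snd q) / \<epsilon>)\<^sup>2 + L (snd q)" for q :: "real \<times> real"
  have "continuous_on UNIV h"
    unfolding h_def using \<open>0 < \<epsilon>\<close>
    by (intro continuous_intros continuous_on_compose2[OF test_fun_continuous[OF L_test]]) auto
  moreover have "doubled \<epsilon> s j (fst q) (snd q) = u j (fst q) - v j (snd q) - h q" for q
    by (simp add: doubled_def h_def)
  ultimately show ?thesis
    using assms u_usc[OF \<open>j \<in> {1,2}\<close>] v_lsc[OF \<open>j \<in> {1,2}\<close>]
    by (simp only:) (intro usc_compact_attains_max usc_doubled_function)
qed

lemma doubled_max_exists:
  fixes j0 :: nat
  assumes "0 < \<epsilon>" "0 \<le> s" "j0 \<in> {1,2}" "xl \<le> x0" "xl \<le> z0"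
  shows "\<exists>j x z. doubled_max \<epsilon> s j x z"
proof -
  define m where "m = doubled \<epsilon> s j0 x0 z0"
  obtain R where R: "\<forall>z\<ge>xl. L z \<le> B - m \<longrightarrow> z \<le> R" using L_coercive by blast
  define C where "C = {xl..R + (1 + B - m) * \<epsilon>} \<times> {xl..R + (1 + B - m) * \<epsilon>}"
  have in_C: "(x, z) \<in> C" if "j \<in> {1,2}" "xl \<le> x" "xl \<le> z" "m \<le> doubled \<epsilon> s j x z" for j x z
    using doubled_superlevel[OF that \<open>0 < \<epsilon>\<close>] R that \<open>0 \<le> s\<close> by (auto simp: C_def)
  have "(x0, z0) \<in> C" using in_C[OF assms(3-5)] by (simp add: m_def)
  have "compact C" "C \<subseteq> {xl..} \<times> {xl..}" by (auto simp: C_def compact_Times)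
  have "\<exists>j\<in>{1,2}. \<exists>a\<in>C. \<forall>j'\<in>{1,2}. \<forall>q\<in>C. doubled \<epsilon> s j' (fst q) (snd q) \<le> doubled \<epsilon> s j (fst a) (snd a)"
    using doubled_attains_max_on[OF \<open>0 < \<epsilon>\<close> _ \<open>compact C\<close> _ \<open>C \<subseteq> {xl..} \<times> {xl..}\<close>] \<open>(x0, z0) \<in> C\<close>
    by (intro finite_family_attains_max) auto
  then obtain j a where "j \<in> {1,2}" "a \<in> C"
    and best: "\<And>j' q. j' \<in> {1,2} \<Longrightarrow> q \<in> C \<Longrightarrow> doubled \<epsilon> s j' (fst q) (snd q) \<le> doubled \<epsilon> s j (fst a) (snd a)"
    by blast
  have "doubled \<epsilon> s j' x z \<le> doubled \<epsilon> s j (fst a) (snd a)" if "j' \<in> {1,2}" "xl \<le> x" "xl \<le> z" for j' x z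
  proof (cases "m \<le> doubled \<epsilon> s j' x z")
    case True
    then show ?thesis using best[OF that(1) in_C[OF that True]] by simp
  next
    case False
    then show ?thesis using best[OF assms(3) \<open>(x0, z0) \<in> C\<close>] by (simp add: m_def)
  qed
  moreover have "xl \<le> fst a" "xl \<le> snd a" using \<open>a \<in> C\<close> \<open>C \<subseteq> {xl..} \<times> {xl..}\<close> by auto
  ultimately have "doubled_max \<epsilon> s j (fst a) (snd a)"
    using \<open>j \<in> {1,2}\<close> unfolding doubled_max_def by simp
  then show ?thesis by blast
qed

lemma gap_uniform_bound:
  assumes "compact C" "C \<subseteq> {xl..}" and below: "\<And>j z. j \<in> {1,2} \<Longrightarrow> z \<in> C \<Longrightarrow> u j z - v j z - L z < T"
  obtains \<delta> where "0 < \<delta>"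
    and "\<And>j x z. j \<in> {1,2} \<Longrightarrow> xl \<le> x \<Longrightarrow> z \<in> C \<Longrightarrow> \<bar>x - z\<bar> < \<delta> \<Longrightarrow> u j x - v j z - L z < T"
proof -
  have uniform: "\<exists>\<delta>>0. \<forall>x\<in>{xl..}. \<forall>z\<in>C. \<bar>x - z\<bar> < \<delta> \<longrightarrow> u j x - v j z - L z < T" if "j \<in> {1,2}" for j
    using below[OF that]
    by (intro usc_lsc_uniform_bound[OF u_usc[OF that] v_lsc[OF that] test_fun_continuous[OF L_test] assms(1,2)])
      auto
  obtain \<delta>1 where "0 < \<delta>1" and \<delta>1: "\<forall>x\<in>{xl..}. \<forall>z\<in>C. \<bar>x - z\<bar> < \<delta>1 \<longrightarrow> u 1 x - v 1 z - L z < T"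
    using uniform[of 1] by auto
  obtain \<delta>2 where "0 < \<delta>2" and \<delta>2: "\<forall>x\<in>{xl..}. \<forall>z\<in>C. \<bar>x - z\<bar> < \<delta>2 \<longrightarrow> u 2 x - v 2 z - L z < T"
    using uniform[of 2] by auto
  show ?thesis
    by (rule that[of "min \<delta>1 \<delta>2"]) (use \<open>0 < \<delta>1\<close> \<open>0 < \<delta>2\<close> \<delta>1 \<delta>2 in auto)
qed

definition near_diagonal_max :: "real \<Rightarrow> real \<Rightarrow> real \<Rightarrow> real \<Rightarrow> nat \<Rightarrow> real \<Rightarrow> real \<Rightarrow> bool" where
  "near_diagonal_max \<tau> \<theta> \<epsilon> s j x z \<longleftrightarrow>
     doubled_max \<epsilon> s j x z \<and> sup_gap - \<tau> \<le> doubled \<epsilon> s j x z \<and> \<bar>x + s - z\<bar> \<le> \<epsilon> * \<theta>"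

lemma exists_near_diagonal_max:
  fixes j0 :: nat
  assumes "0 < \<epsilon>" "0 \<le> s" "s \<le> \<epsilon>" "0 < \<theta>" "\<tau> \<le> \<theta>\<^sup>2 / 2" "\<tau> \<le> 1"
    and R: "\<forall>z\<ge>xl. L z \<le> B - sup_gap + 1 \<longrightarrow> z \<le> R"
    and close: "\<And>j x z. j \<in> {1,2} \<Longrightarrow> xl \<le> x \<Longrightarrow> z \<in> {xl..R} \<Longrightarrow> \<bar>x - z\<bar> < \<delta> \<Longrightarrow>
      u j x - v j z - L z < sup_gap + \<theta>\<^sup>2 / 2"
    and small: "(3 + B - sup_gap) * \<epsilon> < \<delta>"
    and start: "j0 \<in> {1,2}" "xl \<le> x0" "xl \<le> z0" "sup_gap - \<tau> \<le> doubled \<epsilon> s j0 x0 z0"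
  shows "\<exists>j x z. near_diagonal_max \<tau> \<theta> \<epsilon> s j x z"
proof -
  obtain j x z where max: "doubled_max \<epsilon> s j x z"
    using doubled_max_exists[OF \<open>0 < \<epsilon>\<close> \<open>0 \<le> s\<close> start(1-3)] by blast
  then have j: "j \<in> {1,2}" "xl \<le> x" "xl \<le> z" and level: "sup_gap - \<tau> \<le> doubled \<epsilon> s j x z"
    using start unfolding doubled_max_def by (blast, blast, blast, meson order_trans)
  then have "z \<le> R" using R doubled_superlevel(1)[OF j level \<open>0 < \<epsilon>\<close>] \<open>\<tau> \<le> 1\<close> by auto
  have "\<bar>x + s - z\<bar> \<le> (1 + B - (sup_gap - \<tau>)) * \<epsilon>"
    by (rule doubled_superlevel(2)[OF j level \<open>0 < \<epsilon>\<close>])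
  also have "\<dots> \<le> (2 + B - sup_gap) * \<epsilon>"
    using \<open>\<tau> \<le> 1\<close> \<open>0 < \<epsilon>\<close> by (intro mult_right_mono) auto
  finally have "\<bar>x - z\<bar> \<le> (3 + B - sup_gap) * \<epsilon>"
    using \<open>0 \<le> s\<close> \<open>s \<le> \<epsilon>\<close> by (simp add: algebra_simps abs_le_iff)
  then have "u j x - v j z - L z < sup_gap + \<theta>\<^sup>2 / 2"
    using close[OF j(1,2)] j(3) \<open>z \<le> R\<close> small by simp
  then have "((x + s - z) / \<epsilon>)\<^sup>2 \<le> \<theta>\<^sup>2"
    using level \<open>\<tau> \<le> \<theta>\<^sup>2 / 2\<close> by (simp add: doubled_def)
  then have "\<bar>x + s - z\<bar> / \<epsilon> \<le> \<theta>"
    using \<open>0 < \<theta>\<close> \<open>0 < \<epsilon>\<close> by (metis abs_divide abs_le_square_iff abs_of_pos)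
  then have "\<bar>x + s - z\<bar> \<le> \<epsilon> * \<theta>"
    using \<open>0 < \<epsilon>\<close> by (simp add: divide_le_eq mult.commute)
  then show ?thesis using max level unfolding near_diagonal_max_def by blast
qed

definition near_diagonal_scale :: "real \<Rightarrow> real \<Rightarrow> bool" where
  "near_diagonal_scale \<theta> \<epsilon>0 \<longleftrightarrow> (\<forall>\<epsilon> s \<tau> j0 x0 z0.
     0 < \<epsilon> \<and> \<epsilon> \<le> \<epsilon>0 \<and> 0 \<le> s \<and> s \<le> \<epsilon> \<and> 0 < \<tau> \<and> \<tau> \<le> \<theta>\<^sup>2 / 2 \<and>
     j0 \<in> {1,2} \<and> xl \<le> x0 \<and> xl \<le> z0 \<and> sup_gap - \<tau> \<le> doubled \<epsilon> s j0 x0 z0 \<longrightarrow>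
     (\<exists>j x z. near_diagonal_max \<tau> \<theta> \<epsilon> s j x z))"

lemma near_diagonal_scaleD:
  assumes "near_diagonal_scale \<theta> \<epsilon>0" "0 < \<epsilon>" "\<epsilon> \<le> \<epsilon>0" "0 \<le> s" "s \<le> \<epsilon>" "0 < \<tau>" "\<tau> \<le> \<theta>\<^sup>2 / 2"
    and "j0 \<in> {1,2}" "xl \<le> x0" "xl \<le> z0" "sup_gap - \<tau> \<le> doubled \<epsilon> s j0 x0 z0"
  shows "\<exists>j x z. near_diagonal_max \<tau> \<theta> \<epsilon> s j x z"
  using assms unfolding near_diagonal_scale_def by blast

lemma exists_near_diagonal_scale:
  assumes "0 < \<theta>" "\<theta> \<le> 1"
  shows "\<exists>\<epsilon>0>0. near_diagonal_scale \<theta> \<epsilon>0"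
proof -
  obtain R where R: "\<forall>z\<ge>xl. L z \<le> B - sup_gap + 1 \<longrightarrow> z \<le> R" using L_coercive by blast
  have below: "u j z - v j z - L z < sup_gap + \<theta>\<^sup>2 / 2" if "j \<in> {1,2}" "z \<in> {xl..R}" for j z
  proof -
    have "u j z - v j z - L z \<le> sup_gap" using gap_le_sup_gap that by simp
    moreover have "0 < \<theta>\<^sup>2" using \<open>0 < \<theta>\<close> by simp
    ultimately show ?thesis by linarith
  qed
  obtain \<delta> where "0 < \<delta>" and close: "\<And>j x z. j \<in> {1,2} \<Longrightarrow> xl \<le> x \<Longrightarrow> z \<in> {xl..R} \<Longrightarrow>
      \<bar>x - z\<bar> < \<delta> \<Longrightarrow> u j x - v j z - L z < sup_gap + \<theta>\<^sup>2 / 2"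
    by (rule gap_uniform_bound[of "{xl..R}", OF _ _ below]) auto
  have "0 < 4 + B - sup_gap" using sup_gap_le by simp
  define \<epsilon>0 where "\<epsilon>0 = \<delta> / (4 + B - sup_gap)"
  have "0 < \<epsilon>0" using \<open>0 < \<delta>\<close> \<open>0 < 4 + B - sup_gap\<close> by (simp add: \<epsilon>0_def)
  have "\<theta>\<^sup>2 \<le> 1" using assms by (simp add: power_le_one)
  have small: "(3 + B - sup_gap) * \<epsilon> < \<delta>" if "0 < \<epsilon>" "\<epsilon> \<le> \<epsilon>0" for \<epsilon>
  proof -
    have "(3 + B - sup_gap) * \<epsilon> \<le> (3 + B - sup_gap) * \<epsilon>0"
      using that sup_gap_le by (intro mult_left_mono) auto
    also have "\<dots> < \<delta>" using \<open>0 < \<epsilon>0\<close> \<open>0 < 4 + B - sup_gap\<close> by (simp add: \<epsilon>0_def field_simps)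
    finally show ?thesis .
  qed
  have "near_diagonal_scale \<theta> \<epsilon>0"
    unfolding near_diagonal_scale_def
  proof (intro allI impI, elim conjE)
    fix \<epsilon> s \<tau> and j0 :: nat and x0 z0
    assume "0 < \<epsilon>" "\<epsilon> \<le> \<epsilon>0" "0 \<le> s" "s \<le> \<epsilon>" "0 < \<tau>" "\<tau> \<le> \<theta>\<^sup>2 / 2"
      and start: "j0 \<in> {1,2}" "xl \<le> x0" "xl \<le> z0" "sup_gap - \<tau> \<le> doubled \<epsilon> s j0 x0 z0"
    show "\<exists>j x z. near_diagonal_max \<tau> \<theta> \<epsilon> s j x z"
      by (rule exists_near_diagonal_max[OF \<open>0 < \<epsilon>\<close> \<open>0 \<le> s\<close> \<open>s \<le> \<epsilon>\<close> \<open>0 < \<theta>\<close> \<open>\<tau> \<le> \<theta>\<^sup>2 / 2\<close> _ R close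
            small[OF \<open>0 < \<epsilon>\<close> \<open>\<epsilon> \<le> \<epsilon>0\<close>] start])
        (use \<open>\<tau> \<le> \<theta>\<^sup>2 / 2\<close> \<open>\<theta>\<^sup>2 \<le> 1\<close> in simp)
  qed
  then show ?thesis using \<open>0 < \<epsilon>0\<close> by blast
qed

lemma near_diagonal_max_bound:
  assumes "near_diagonal_max \<tau> \<theta> \<epsilon> s j x z" "xl < z" "0 < \<epsilon>" "0 \<le> s" "s \<le> \<epsilon>" "\<theta> \<le> 1"
  shows "\<rho> * (sup_gap - \<tau>) \<le> 4 * \<bar>r\<bar> * \<theta> + K"
proof -
  define A where "A = (x - z) * (2 * (x - z + s) / \<epsilon>\<^sup>2)"
  have max: "doubled_max \<epsilon> s j x z" and level: "sup_gap - \<tau> \<le> doubled \<epsilon> s j x z"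
    and near: "\<bar>x - z + s\<bar> \<le> \<epsilon> * \<theta>"
    using assms(1) unfolding near_diagonal_max_def by (simp_all add: diff_add_eq)
  have "sup_gap - \<tau> \<le> u j x - v j z"
    using level doubled_le_gap[of \<epsilon> s j x z] L_nonneg[of z] \<open>xl < z\<close> by linarith
  then have "\<rho> * (sup_gap - \<tau>) \<le> \<rho> * (u j x - v j z)" using rho_pos by simp
  also have "\<dots> \<le> r * A + K"
    using doubled_max_viscosity[OF max \<open>xl < z\<close> \<open>0 < \<epsilon>\<close>] by (simp add: A_def diff_add_eq mult.assoc)
  also have "r * A \<le> \<bar>r\<bar> * \<bar>A\<bar>" by (metis abs_ge_self abs_mult)
  also have "\<bar>r\<bar> * \<bar>A\<bar> \<le> \<bar>r\<bar> * (4 * \<theta>)"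
    unfolding A_def using doubling_gradient_term_le[OF near assms(4,5,3,6)] by (intro mult_left_mono) auto
  finally show ?thesis by simp
qed

lemma boundary_case_bound:
  assumes "j \<in> {1,2}" "sup_gap \<le> u j xl - v j xl - L xl"
    and "0 < \<theta>" "\<theta> < 1" "0 < \<tau>" "\<tau> \<le> \<theta>\<^sup>2 / 2"
  shows "\<rho> * (sup_gap - \<tau>) \<le> 4 * \<bar>r\<bar> * \<theta> + K"
proof -
  obtain \<epsilon>0 where "0 < \<epsilon>0" and scale: "near_diagonal_scale \<theta> \<epsilon>0"
    using exists_near_diagonal_scale \<open>0 < \<theta>\<close> \<open>\<theta> < 1\<close> by (meson less_imp_le)
  obtain d where "0 < d" and L_close: "\<And>c. dist c xl < d \<Longrightarrow> dist (L c) (L xl) < \<tau> / 2"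
    using test_fun_continuous[OF L_test] \<open>0 < \<tau>\<close> unfolding continuous_on_iff by (metis UNIV_I half_gt_zero)
  \<comment> \<open>the boundary value of \<open>v j\<close> is a \<open>Liminf\<close>, so it is almost attained just inside\<close>
  obtain c where c: "xl < c" "c < xl + min \<epsilon>0 d" "v j c < v j xl + \<tau> / 2"
    using Liminf_at_right_approx[of xl "v j" "min \<epsilon>0 d" "\<tau> / 2"] v_boundary[OF \<open>j \<in> {1,2}\<close>]
      \<open>0 < \<epsilon>0\<close> \<open>0 < d\<close> \<open>0 < \<tau>\<close> by auto
  define \<epsilon> where "\<epsilon> = c - xl"
  have "0 < \<epsilon>" "\<epsilon> \<le> \<epsilon>0" using c by (auto simp: \<epsilon>_def)
  have "dist c xl < d" using c by (simp add: dist_real_def)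
  then have "\<bar>L c - L xl\<bar> < \<tau> / 2" using L_close by (simp only: dist_real_def)
  then have "L c < L xl + \<tau> / 2" unfolding abs_less_iff by linarith
  then have "sup_gap - \<tau> \<le> doubled \<epsilon> \<epsilon> j xl c"
    using assms(2) c(3) by (simp add: doubled_def \<epsilon>_def)
  then obtain j' x z where nd: "near_diagonal_max \<tau> \<theta> \<epsilon> \<epsilon> j' x z"
    using near_diagonal_scaleD[OF scale \<open>0 < \<epsilon>\<close> \<open>\<epsilon> \<le> \<epsilon>0\<close> less_imp_le[OF \<open>0 < \<epsilon>\<close>] order_refl \<open>0 < \<tau>\<close>
        \<open>\<tau> \<le> \<theta>\<^sup>2 / 2\<close> \<open>j \<in> {1,2}\<close> order_refl less_imp_le[OF c(1)]]
    by blast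
  \<comment> \<open>the shift by \<open>\<epsilon>\<close> keeps the supersolution variable off the boundary\<close>
  have "xl \<le> x" "\<bar>x + \<epsilon> - z\<bar> \<le> \<epsilon> * \<theta>" using nd by (auto simp: near_diagonal_max_def doubled_max_def)
  moreover have "\<epsilon> * \<theta> < \<epsilon>" using \<open>0 < \<epsilon>\<close> \<open>\<theta> < 1\<close> by simp
  ultimately have "xl < z" by linarith
  then show ?thesis
    using near_diagonal_max_bound[OF nd _ \<open>0 < \<epsilon>\<close>] \<open>0 < \<epsilon>\<close> \<open>\<theta> < 1\<close> by simp
qed

lemma interior_case_bound:
  assumes below: "\<And>j. j \<in> {1,2} \<Longrightarrow> u j xl - v j xl - L xl < sup_gap"
    and "0 < \<theta>" "\<theta> \<le> 1" "0 < \<tau>0" "\<tau>0 \<le> \<theta>\<^sup>2 / 2"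
  shows "\<exists>\<tau>. 0 < \<tau> \<and> \<tau> \<le> \<tau>0 \<and> \<rho> * (sup_gap - \<tau>) \<le> 4 * \<bar>r\<bar> * \<theta> + K"
proof -
  define m where "m = max (u 1 xl - v 1 xl - L xl) (u 2 xl - v 2 xl - L xl)"
  define \<eta> where "\<eta> = (sup_gap - m) / 2"
  have "m < sup_gap" using below[of 1] below[of 2] by (simp add: m_def)
  then have "0 < \<eta>" "m < sup_gap - \<eta>" by (simp_all add: \<eta>_def field_simps)
  obtain f where "0 < f" and f: "\<And>j x. j \<in> {1,2} \<Longrightarrow> xl \<le> x \<Longrightarrow> \<bar>x - xl\<bar> < f \<Longrightarrow>
      u j x - v j xl - L xl < sup_gap - \<eta>"
    by (rule gap_uniform_bound[of "{xl}" "sup_gap - \<eta>"]) (use \<open>m < sup_gap - \<eta>\<close> in \<open>auto simp: m_def\<close>)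
  define \<tau> where "\<tau> = min \<tau>0 \<eta>"
  have "0 < \<tau>" "\<tau> \<le> \<tau>0" "\<tau> \<le> \<eta>" "\<tau> \<le> \<theta>\<^sup>2 / 2" using \<open>0 < \<tau>0\<close> \<open>0 < \<eta>\<close> \<open>\<tau>0 \<le> \<theta>\<^sup>2 / 2\<close> by (auto simp: \<tau>_def)
  obtain \<epsilon>0 where "0 < \<epsilon>0" and scale: "near_diagonal_scale \<theta> \<epsilon>0"
    using exists_near_diagonal_scale \<open>0 < \<theta>\<close> \<open>\<theta> \<le> 1\<close> by blast
  define \<epsilon> where "\<epsilon> = min \<epsilon>0 (f / 2)"
  have "0 < \<epsilon>" "\<epsilon> \<le> \<epsilon>0" "\<epsilon> < f" using \<open>0 < \<epsilon>0\<close> \<open>0 < f\<close> by (auto simp: \<epsilon>_def)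
  obtain j0 x0 where "j0 \<in> {1,2}" "xl \<le> x0" "sup_gap - \<tau> < u j0 x0 - v j0 x0 - L x0"
    using sup_gap_approx[OF \<open>0 < \<tau>\<close>] by blast
  then have "sup_gap - \<tau> \<le> doubled \<epsilon> 0 j0 x0 x0" by (simp add: doubled_def)
  then obtain j x z where nd: "near_diagonal_max \<tau> \<theta> \<epsilon> 0 j x z"
    using near_diagonal_scaleD[OF scale \<open>0 < \<epsilon>\<close> \<open>\<epsilon> \<le> \<epsilon>0\<close> order_refl less_imp_le[OF \<open>0 < \<epsilon>\<close>] \<open>0 < \<tau>\<close>
        \<open>\<tau> \<le> \<theta>\<^sup>2 / 2\<close> \<open>j0 \<in> {1,2}\<close> \<open>xl \<le> x0\<close> \<open>xl \<le> x0\<close>]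
    by blast
  \<comment> \<open>near \<open>z = xl\<close> the doubled function stays below the level \<open>sup_gap - \<eta>\<close>\<close>
  have "xl < z"
  proof (rule ccontr)
    assume "\<not> xl < z"
    with nd have j: "j \<in> {1,2}" "xl \<le> x" "z = xl" and level: "sup_gap - \<tau> \<le> doubled \<epsilon> 0 j x z"
      by (auto simp: near_diagonal_max_def doubled_max_def)
    have "\<bar>x - xl\<bar> \<le> \<epsilon> * \<theta>" using nd j by (simp add: near_diagonal_max_def)
    also have "\<dots> \<le> \<epsilon>" using \<open>0 < \<epsilon>\<close> \<open>\<theta> \<le> 1\<close> by (simp add: mult_left_le)
    finally have "u j x - v j xl - L xl < sup_gap - \<eta>" using f j \<open>\<epsilon> < f\<close> by simp
    moreover have "sup_gap - \<tau> \<le> u j x - v j xl - L xl"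
      using level doubled_le_gap[of \<epsilon> 0 j x z] \<open>z = xl\<close> by simp
    ultimately show False using \<open>\<tau> \<le> \<eta>\<close> by linarith
  qed
  then have "\<rho> * (sup_gap - \<tau>) \<le> 4 * \<bar>r\<bar> * \<theta> + K"
    by (rule near_diagonal_max_bound[OF nd _ \<open>0 < \<epsilon>\<close>]) (use \<open>0 < \<epsilon>\<close> \<open>\<theta> \<le> 1\<close> in auto)
  then show ?thesis using \<open>0 < \<tau>\<close> \<open>\<tau> \<le> \<tau>0\<close> by blast
qed

theorem rho_sup_gap_le: "\<rho> * sup_gap \<le> K"
proof (rule ccontr)
  assume "\<not> \<rho> * sup_gap \<le> K"
  then have "0 < (\<rho> * sup_gap - K) / 2" by simp
  then have "eventually (\<lambda>\<theta>. \<theta> < 1 \<and> 4 * \<bar>r\<bar> * \<theta> < (\<rho> * sup_gap - K) / 2) (at_right 0)"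
    by (intro eventually_conj order_tendstoD(2)[OF tendsto_ident_at]
        order_tendstoD(2)[OF tendsto_mult_right_zero[OF tendsto_ident_at]]) auto
  then obtain \<theta> where \<theta>: "0 < \<theta>" "\<theta> < 1" "4 * \<bar>r\<bar> * \<theta> < (\<rho> * sup_gap - K) / 2"
    using exists_pos_if_eventually_at_right_0 by blast
  have "eventually (\<lambda>\<tau>. \<tau> < \<theta>\<^sup>2 / 2 \<and> \<rho> * \<tau> < (\<rho> * sup_gap - K) / 2) (at_right 0)"
    using \<open>0 < \<theta>\<close> \<open>0 < (\<rho> * sup_gap - K) / 2\<close>
    by (intro eventually_conj order_tendstoD(2)[OF tendsto_ident_at]
        order_tendstoD(2)[OF tendsto_mult_right_zero[OF tendsto_ident_at]]) auto
  then obtain \<tau>0 where \<tau>0: "0 < \<tau>0" "\<tau>0 < \<theta>\<^sup>2 / 2" "\<rho> * \<tau>0 < (\<rho> * sup_gap - K) / 2"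
    using exists_pos_if_eventually_at_right_0 by blast
  have "\<exists>\<tau>. 0 < \<tau> \<and> \<tau> \<le> \<tau>0 \<and> \<rho> * (sup_gap - \<tau>) \<le> 4 * \<bar>r\<bar> * \<theta> + K"
  proof (cases "\<exists>j\<in>{1,2}. sup_gap \<le> u j xl - v j xl - L xl")
    case True
    then show ?thesis using boundary_case_bound \<theta>(1,2) \<tau>0(1,2) by (meson less_imp_le order_refl)
  next
    case False
    then show ?thesis using interior_case_bound[of \<theta> \<tau>0] \<theta>(1,2) \<tau>0(1,2) by (auto simp: not_le)
  qed
  then obtain \<tau> where "\<tau> \<le> \<tau>0" "\<rho> * (sup_gap - \<tau>) \<le> 4 * \<bar>r\<bar> * \<theta> + K" by blast
  moreover have "\<rho> * \<tau> \<le> \<rho> * \<tau>0" using rho_pos \<open>\<tau> \<le> \<tau>0\<close> by simp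
  moreover have "\<rho> * (sup_gap - \<tau>) = \<rho> * sup_gap - \<rho> * \<tau>" by (simp add: right_diff_distrib)
  ultimately show False using \<theta>(3) \<tau>0(3) by argo
qed

end

context sub_super_pair
begin

theorem comparison:
  assumes "j \<in> {1,2}" "xl \<le> x"
  shows "u j x \<le> v j x"
proof (rule ccontr)
  assume "\<not> u j x \<le> v j x"
  define \<delta> where "\<delta> = u j x - v j x"
  define C where "C = 2 * \<bar>r\<bar> + \<bar>r * xl + y 1\<bar> + \<bar>r * xl + y 2\<bar>"
  have "0 < \<delta> / 2" "0 < \<rho> * \<delta> / 2" using \<open>\<not> u j x \<le> v j x\<close> rho_pos by (simp_all add: \<delta>_def)
  then have "eventually (\<lambda>\<beta>. \<beta> * ln (1 + (x - xl)\<^sup>2) < \<delta> / 2 \<and> \<beta> * C < \<rho> * \<delta> / 2) (at_right 0)"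
    by (intro eventually_conj order_tendstoD(2)[OF tendsto_mult_left_zero[OF tendsto_ident_at]])
  then obtain \<beta> where "0 < \<beta>" "log_penalty \<beta> xl x < \<delta> / 2" "\<beta> * C < \<rho> * \<delta> / 2"
    using exists_pos_if_eventually_at_right_0 unfolding log_penalty_def by blast
  interpret P: penalized_pair \<rho> r \<gamma> xl B y lam u v "log_penalty \<beta> xl" "log_penalty' \<beta> xl" "\<beta> * C"
  proof (intro penalized_pair.intro sub_super_pair_axioms penalized_pair_axioms.intro)
    fix i z assume "i \<in> {1::nat,2}" "xl \<le> z"
    then have "(r * z + y i) * log_penalty' \<beta> xl z \<le> \<beta> * (2 * \<bar>r\<bar> + \<bar>r * xl + y i\<bar>)"
      using \<open>0 < \<beta>\<close> by (intro log_penalty_drift_le) auto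
    also have "\<dots> \<le> \<beta> * C"
      using \<open>i \<in> {1,2}\<close> \<open>0 < \<beta>\<close> by (intro mult_left_mono) (auto simp: C_def)
    finally show "(r * z + y i) * log_penalty' \<beta> xl z \<le> \<beta> * C" .
  qed (use \<open>0 < \<beta>\<close> in \<open>auto intro: test_fun_log_penalty log_penalty_nonneg log_penalty'_nonneg
        log_penalty_coercive\<close>)
  have "\<delta> / 2 < P.sup_gap"
    using P.gap_le_sup_gap[OF assms] \<open>log_penalty \<beta> xl x < \<delta> / 2\<close> by (simp add: \<delta>_def)
  then have "\<rho> * \<delta> / 2 < \<rho> * P.sup_gap" using rho_pos by simp
  then show False using P.rho_sup_gap_le \<open>\<beta> * C < \<rho> * \<delta> / 2\<close> by simp
qed

end

lemma gap_bounded: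
  fixes u v :: "nat \<Rightarrow> real \<Rightarrow> real"
  assumes "\<exists>M. \<forall>j\<in>{1,2}. \<forall>x\<ge>xl. \<bar>u j x\<bar> \<le> M" and "\<exists>M. \<forall>j\<in>{1,2}. \<forall>x>xl. \<bar>v j x\<bar> \<le> M"
  shows "\<exists>B. \<forall>j\<in>{1,2}. \<forall>x\<ge>xl. \<forall>z\<ge>xl. u j x - v j z \<le> B"
proof -
  obtain Mu Mv where Mu: "\<forall>j\<in>{1,2}. \<forall>x\<ge>xl. \<bar>u j x\<bar> \<le> Mu" and Mv: "\<forall>j\<in>{1,2}. \<forall>x>xl. \<bar>v j x\<bar> \<le> Mv"
    using assms by blast
  define Mv' where "Mv' = max Mv (max \<bar>v 1 xl\<bar> \<bar>v 2 xl\<bar>)"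
  have v_below: "- v j z \<le> Mv'" if "j \<in> {1,2}" "xl \<le> z" for j z
  proof (cases "z = xl")
    case True
    then show ?thesis using that by (auto simp: Mv'_def)
  next
    case False
    then have "xl < z" using that(2) by simp
    then have "\<bar>v j z\<bar> \<le> Mv" using Mv that(1) by blast
    then show ?thesis by (simp add: Mv'_def)
  qed
  have "u j x - v j z \<le> Mu + Mv'" if "j \<in> {1,2}" "xl \<le> x" "xl \<le> z" for j x z
  proof -
    have "u j x \<le> Mu" using Mu that abs_le_iff by blast
    then show ?thesis using v_below[OF that(1,3)] by argo
  qed
  then show ?thesis by blast
qed

theorem mainTheorem2:
  fixes \<rho> r \<gamma> xl :: real and y lam :: "nat \<Rightarrow> real" and u v :: "nat \<Rightarrow> real \<Rightarrow> real"
  assumes "\<rho> > 0" and "r < \<rho>" and "0 < y 1" and "y 1 < y 2" and "\<gamma> > 1"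
    and "xl \<le> 0" and "\<rho> * xl + y 1 > 0" and "\<rho> * xl + y 2 > 0"
    and "lam 1 \<ge> 0" and "lam 2 \<ge> 0"
    and u_bdd: "\<exists>M. \<forall>j\<in>{1,2}. \<forall>x\<ge>xl. \<bar>u j x\<bar> \<le> M"
    and u_sub: "visc_sub \<rho> r \<gamma> y lam xl {xl..} u"
    and v_bdd: "\<exists>M. \<forall>j\<in>{1,2}. \<forall>x>xl. \<bar>v j x\<bar> \<le> M"
    and v_super: "visc_super \<rho> r \<gamma> y lam xl {xl<..} v"
    and v_ext: "\<forall>j\<in>{1,2}. ereal (v j xl) = Liminf (at_right xl) (\<lambda>z. ereal (v j z))"
  shows "\<forall>j\<in>{1,2}. \<forall>x\<ge>xl. u j x \<le> v j x"
proof -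
  \<comment> \<open>of the standing assumptions only \<open>\<rho> > 0\<close>, \<open>\<gamma> > 1\<close> and \<open>lam j \<ge> 0\<close> are needed\<close>
  obtain B where "\<forall>j\<in>{1,2}. \<forall>x\<ge>xl. \<forall>z\<ge>xl. u j x - v j z \<le> B"
    using gap_bounded[OF u_bdd v_bdd] by blast
  then interpret sub_super_pair \<rho> r \<gamma> xl B y lam u v
    using assms by unfold_locales auto
  show ?thesis using comparison by blast
qed

end
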